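(* Let $G_a=(V,E_a)$ with $E_a\subseteq E$ a set of directed links without self-loops, let $D_a^+$ be its maximum out-degree, and let $\Delta\ge1$ be an integer. For an integer $B\ge1$ and directed graphs $G^{(t)}=(V,E^{(t)})$, $t=0,\dots,B-1$, with $\bigcup_{t=0}^{B-1}E^{(t)}=E_a$, define $$F(B):=\Big(\sum_{t=0}^{B-1}\tau(G^{(t)})\Big)\Delta^2B\left(\Big\lceil\frac{D_a^+}{B}\Big\rceil+1\right)^{4\Delta B}.$$ Then $$F(B)\ge F(1)=\tau(G_a)\,\Delta^2(1+D_a^+)^{4\Delta}.$$
   Context: $G=(V,E)$ is a bidirected directed base topology on $V=\{1,\dots,n\}$. Communication model: two distinct directed links $(i,j),(k,l)$ (with $i\ne j$, $k\ne l$) can be scheduled in the same transmission slot iff (a) $i\ne l$ and $j\ne k$ (half-duplex), and (b) if $i\ne k$ then $(i,l)\notin E$ and $(k,j)\notin E$ (interference); otherwise they conflict. For a set $E'$ of activated links, its conflict graph is the undirected graph with vertex set $E'$ and an edge between every conflicting pair. For $H=(V,E')$, $\tau(H)$ denotes the chromatic number of the conflict graph of $E'$ (the minimum number of collision-free transmission slots needed to schedule all links of $E'$; $\tau=0$ if $E'=\emptyset$). The maximum out-degree $D_a^+$ is $\max_j|\{i:(j,i)\in E_a\}|$. *)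

theory Defs
  imports Complex_Main
begin

text \<open>Base topology E: a set of directed links on V = {1..n}.
  Two distinct links conflict unless they satisfy half-duplex and interference conditions.\<close>

definition conflict :: "(nat \<times> nat) set \<Rightarrow> nat \<times> nat \<Rightarrow> nat \<times> nat \<Rightarrow> bool" where
  "conflict E e1 e2 \<longleftrightarrow> e1 \<noteq> e2 \<and>
     \<not> (let (i, j) = e1; (k, l) = e2 in
          (i \<noteq> l \<and> j \<noteq> k) \<and>
          (i \<noteq> k \<longrightarrow> (i, l) \<notin> E \<and> (k, j) \<notin> E))"

definition proper_colouring :: "(nat \<times> nat) set \<Rightarrow> (nat \<times> nat) set \<Rightarrow> nat \<Rightarrow> (nat \<times> nat \<Rightarrow> nat) \<Rightarrow> bool" where
  "proper_colouring E E' k c \<longleftrightarrow>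
     (\<forall>e\<in>E'. c e < k) \<and> (\<forall>e1\<in>E'. \<forall>e2\<in>E'. conflict E e1 e2 \<longrightarrow> c e1 \<noteq> c e2)"

definition tau :: "(nat \<times> nat) set \<Rightarrow> (nat \<times> nat) set \<Rightarrow> nat" where
  "tau E E' = (LEAST k. \<exists>c. proper_colouring E E' k c)"

definition max_outdeg :: "nat set \<Rightarrow> (nat \<times> nat) set \<Rightarrow> nat" where
  "max_outdeg V Ea = Max ((\<lambda>j. card {i. (j, i) \<in> Ea}) ` V)"

definition Fval :: "(nat \<times> nat) set \<Rightarrow> nat \<Rightarrow> nat \<Rightarrow> nat \<Rightarrow> (nat \<Rightarrow> (nat \<times> nat) set) \<Rightarrow> real" where
  "Fval E Delta D B Et =
     (\<Sum>t<B. real (tau E (Et t))) * real Delta ^ 2 * real B *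
     (real_of_int \<lceil>real D / real B\<rceil> + 1) ^ (4 * Delta * B)"

end

theory Submission
  imports Defs
begin

text \<open>Proper colourings of the parts can be shifted onto disjoint ranges of colours, so
  \<open>tau\<close> is subadditive under unions of link sets and \<open>tau(G_a) \<le> \<Sum>\<^sub>t tau(G_t)\<close>.
  For the remaining factor, Bernoulli's inequality gives
  \<open>1 + D \<le> 1 + B\<lceil>D/B\<rceil> \<le> (1 + \<lceil>D/B\<rceil>)^B\<close>; raising this to the power \<open>4\<Delta>\<close>
  and multiplying the right-hand side by \<open>B \<ge> 1\<close> bounds \<open>(1 + D)^(4\<Delta>)\<close> by the
  corresponding factor of \<open>F(B)\<close>.\<close>

lemma tau_le:
  assumes "proper_colouring E S k c"
  shows "tau E S \<le> k"
  using assms unfolding tau_def by (metis (mono_tags, lifting) Least_le)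

lemma finite_imp_proper_colouring_card:
  assumes "finite S"
  shows "\<exists>c. proper_colouring E S (card S) c"
proof -
  obtain c where c: "bij_betw c S {0..<card S}"
    using ex_bij_betw_finite_nat[OF assms] by blast
  have "proper_colouring E S (card S) c"
    unfolding proper_colouring_def conflict_def
    using bij_betw_apply[OF c] bij_betw_imp_inj_on[OF c] by (auto dest: inj_onD)
  then show ?thesis by blast
qed

lemma proper_colouring_tau:
  assumes "finite S"
  shows "\<exists>c. proper_colouring E S (tau E S) c"
  using finite_imp_proper_colouring_card[OF assms] unfolding tau_def by (rule LeastI)

lemma tau_Un_le:
  assumes "finite A" "finite B"
  shows "tau E (A \<union> B) \<le> tau E A + tau E B"
proof -
  obtain cA where cA: "proper_colouring E A (tau E A) cA"
    using proper_colouring_tau[OF assms(1)] by blast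
  obtain cB where cB: "proper_colouring E B (tau E B) cB"
    using proper_colouring_tau[OF assms(2)] by blast
  define c where "c e = (if e \<in> A then cA e else tau E A + cB e)" for e
  have "proper_colouring E (A \<union> B) (tau E A + tau E B) c"
    unfolding proper_colouring_def
  proof (intro conjI ballI impI)
    fix e assume "e \<in> A \<union> B"
    then show "c e < tau E A + tau E B"
      using cA cB unfolding proper_colouring_def c_def by auto
  next
    fix e1 e2 assume "e1 \<in> A \<union> B" "e2 \<in> A \<union> B" "conflict E e1 e2"
    then show "c e1 \<noteq> c e2"
      using cA cB unfolding proper_colouring_def c_def by (auto split: if_splits)
  qed
  then show ?thesis by (rule tau_le)
qed

lemma tau_UN_le_sum:
  assumes "finite I" "\<And>i. i \<in> I \<Longrightarrow> finite (S i)"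
  shows "tau E (\<Union>i\<in>I. S i) \<le> (\<Sum>i\<in>I. tau E (S i))"
  using assms
proof (induction I rule: finite_induct)
  case empty
  have "tau E {} \<le> 0"
    by (rule tau_le[where c = "\<lambda>_. 0"]) (simp add: proper_colouring_def)
  then show ?case by simp
next
  case (insert i I)
  have "tau E (\<Union>j\<in>insert i I. S j) \<le> tau E (S i) + tau E (\<Union>j\<in>I. S j)"
    using insert.prems insert.hyps(1) by (simp add: tau_Un_le)
  also have "\<dots> \<le> tau E (S i) + (\<Sum>j\<in>I. tau E (S j))"
    using insert.IH insert.prems by simp
  finally show ?case using insert.hyps by simp
qed

lemma one_add_le_power_ceiling_divide:
  fixes D B :: nat
  assumes "B \<ge> 1"
  shows "1 + real D \<le> (real_of_int \<lceil>real D / real B\<rceil> + 1) ^ B"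
proof -
  define x where "x = real_of_int \<lceil>real D / real B\<rceil>"
  have "0 \<le> real D / real B" "real D / real B \<le> x" unfolding x_def by simp_all
  then have "real D \<le> real B * x" and "x \<ge> 0"
    using assms by (simp add: field_simps, linarith)
  moreover from \<open>x \<ge> 0\<close> have "1 + real B * x \<le> (1 + x) ^ B"
    by (intro Bernoulli_inequality) simp
  ultimately show ?thesis unfolding x_def by (simp add: add.commute)
qed

lemma power_le_scaled_power_ceiling_divide:
  fixes D B m :: nat
  assumes "B \<ge> 1"
  shows "(1 + real D) ^ m \<le> real B * (real_of_int \<lceil>real D / real B\<rceil> + 1) ^ (m * B)"
proof -
  let ?y = "real_of_int \<lceil>real D / real B\<rceil> + 1"
  have "(1 + real D) ^ m \<le> (?y ^ B) ^ m"
    using one_add_le_power_ceiling_divide[OF assms] by (intro power_mono) simp_all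
  also have "\<dots> = ?y ^ (m * B)" by (simp add: power_mult mult.commute)
  also have "\<dots> \<le> real B * ?y ^ (m * B)"
  proof -
    have "0 \<le> real D / real B" by simp
    then have "0 \<le> ?y" using le_of_int_ceiling[of "real D / real B"] by linarith
    then show ?thesis using assms by (simp add: mult_le_cancel_right1)
  qed
  finally show ?thesis .
qed

lemma Fval_one:
  "Fval E Delta D 1 (\<lambda>_. S) = real (tau E S) * real Delta ^ 2 * (1 + real D) ^ (4 * Delta)"
  unfolding Fval_def by (simp add: add.commute)

lemma Fval_one_Union_le:
  assumes "B \<ge> 1" "\<And>t. t < B \<Longrightarrow> finite (Et t)"
  shows "Fval E Delta D 1 (\<lambda>_. \<Union>t<B. Et t) \<le> Fval E Delta D B Et"
proof -
  let ?y = "real_of_int \<lceil>real D / real B\<rceil> + 1"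
  have "real (tau E (\<Union>t<B. Et t)) \<le> (\<Sum>t<B. real (tau E (Et t)))"
    using tau_UN_le_sum[of "{..<B}" Et E] assms(2) by (simp flip: of_nat_sum)
  moreover have "real Delta ^ 2 * (1 + real D) ^ (4 * Delta)
      \<le> real Delta ^ 2 * (real B * ?y ^ (4 * Delta * B))"
    using power_le_scaled_power_ceiling_divide[OF assms(1)] by (rule mult_left_mono) simp
  ultimately have "real (tau E (\<Union>t<B. Et t)) * (real Delta ^ 2 * (1 + real D) ^ (4 * Delta))
      \<le> (\<Sum>t<B. real (tau E (Et t))) * (real Delta ^ 2 * (real B * ?y ^ (4 * Delta * B)))"
    by (rule mult_mono) (simp_all add: sum_nonneg)
  then show ?thesis unfolding Fval_one by (simp only: Fval_def mult.assoc)
qed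

theorem lemma3:
  fixes n :: nat and E Ea :: "(nat \<times> nat) set" and Delta B :: nat
    and Et :: "nat \<Rightarrow> (nat \<times> nat) set"
  assumes E_on_V: "E \<subseteq> {1..n} \<times> {1..n}"
    and E_bidirected: "\<forall>i j. (i, j) \<in> E \<longrightarrow> (j, i) \<in> E"
    and Ea_sub: "Ea \<subseteq> E"
    and Ea_noloop: "\<forall>i. (i, i) \<notin> Ea"
    and Delta_ge: "Delta \<ge> 1"
    and B_ge: "B \<ge> 1"
    and union: "(\<Union>t<B. Et t) = Ea"
  shows "Fval E Delta (max_outdeg {1..n} Ea) B Et \<ge> Fval E Delta (max_outdeg {1..n} Ea) 1 (\<lambda>_. Ea)
    \<and> Fval E Delta (max_outdeg {1..n} Ea) 1 (\<lambda>_. Ea)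
        = real (tau E Ea) * real Delta ^ 2 * (1 + real (max_outdeg {1..n} Ea)) ^ (4 * Delta)"
proof -
  have "finite Ea"
    by (rule finite_subset[OF subset_trans[OF Ea_sub E_on_V]]) simp
  then have "finite (Et t)" if "t < B" for t
    by (rule finite_subset[rotated]) (use union that in blast)
  then have "Fval E Delta (max_outdeg {1..n} Ea) 1 (\<lambda>_. \<Union>t<B. Et t) \<le> Fval E Delta (max_outdeg {1..n} Ea) B Et"
    by (rule Fval_one_Union_le[OF B_ge])
  then show ?thesis unfolding union Fval_one by simp
qed

end
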